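(* Let $\mathcal{X}$ be a nonempty closed domain set whose closed convex hull $\operatorname{clconv}(\mathcal{X})$ contains no line, let $\underline{m}^*\ge0$ be an integer, and consider only one-sided LMIs ($b_i^l=-\infty$ for all $i\in[m]$). The following are equivalent: (a) every face $F$ of $\operatorname{clconv}(\mathcal{X})$ of dimension at most $\underline{m}^*$ satisfies $F\subseteq\mathcal{X}$; (b) $\mathbf{V}_{\mathrm{opt}}=\mathbf{V}_{\mathrm{rel}}$ for every objective matrix $A_0$ and every system of $m$ one-sided LMIs $\langle A_i,X\rangle\le b_i^u$, $i\in[m]$, such that: (i) $\mathcal{C}_{\mathrm{rel}}\cap\operatorname{ri}(\operatorname{clconv}(\mathcal{X}))\neq\emptyset$; (ii) $\mathbf{V}_{\mathrm{rel}}>-\infty$; (iii) the set of optimal solutions of $\min_{X\in\mathcal{C}_{\mathrm{rel}}}\langle A_0,X\rangle$ is bounded; (iv) there exist an optimal solution $X^*$ of this problem and an optimal Lagrangian multiplier vector $\mu^*\in\mathbb{R}^m_+$ with exactly $\underline{m}^*$ nonzero entries, indexed by $T\subseteq[m]$ (i.e. $\mu^*_i=0$ whenever $\langle A_i,X^*\rangle<b_i^u$, and $-A_0-\sum_{i\in T}\mu^*_iA_i\in\mathcal{N}_{\operatorname{clconv}(\mathcal{X})}(X^* )$); and (v) with $\mathcal{H}=\operatorname{span}\{A_i\}_{i\in T}$, the matrices $A_j-\operatorname{Proj}_{\mathcal{H}}(A_j)$, $j\in[m]\setminus T$, are parallel with the same direction (there is $G$ with $A_j-\operatorname{Proj}_{\mathcal{H}}(A_j)=c_jG$,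 $c_j\ge0$, for all $j\in[m]\setminus T$).
   Context: Let $\mathcal{Q}$ be one of $\mathbb{S}^n_+$, $\mathbb{S}^n$ or $\mathbb{R}^{n\times p}$, where $k\le n\le p$ are positive integers, with trace inner product $\langle A,X\rangle=\operatorname{tr}(A^\top X)$. A domain set is a set $\mathcal{X}=\{X\in\mathcal{Q}:\operatorname{rank}(X)\le k,\ F_j(X)\le0\ \forall j\in[t]\}$ with each $F_j:\mathcal{Q}\to\mathbb{R}$ continuous. Given matrices $A_1,\dots,A_m$ (same size as elements of $\mathcal{Q}$) and $b_i^u\in(-\infty,+\infty]$, set $\mathcal{C}=\{X\in\mathcal{X}:\langle A_i,X\rangle\le b_i^u\ \forall i\}$, $\mathcal{C}_{\mathrm{rel}}=\{X\in\operatorname{clconv}(\mathcal{X}):\langle A_i,X\rangle\le b_i^u\ \forall i\}$, $\mathbf{V}_{\mathrm{opt}}=\inf_{X\in\mathcal{C}}\langle A_0,X\rangle$, $\mathbf{V}_{\mathrm{rel}}=\inf_{X\in\mathcal{C}_{\mathrm{rel}}}\langle A_0,X\rangle$. $\operatorname{ri}$ denotes relative interior; $\mathcal{N}_D(X)=\{G:\langle G,Y-X\rangle\le0\ \forall Y\in D\}$ is the normal cone; $\operatorname{Proj}_{\mathcal{H}}$ is orthogonal projection onto $\mathcal{H}$ in the trace inner product. A face of a closed convex set $D$ is a convex $F\subseteq D$ such that any segment $[a,b]\subseteq D$ whose open part meets $F$ lies in $F$; its dimension is that of its affine hull. *)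

theory Defs
  imports "HOL-Analysis.Analysis"
begin

text \<open>Matrices are elements of real^'p^'n (n rows, p columns). The library inner product
  on this type is sum_i sum_j X_ij Y_ij, i.e. the trace inner product tr(X^T Y).\<close>

definition sym_mats :: "(real^'n^'n) set" where
  "sym_mats = {X. transpose X = X}"

definition psd_mats :: "(real^'n^'n) set" where
  "psd_mats = {X. transpose X = X \<and> (\<forall>v. 0 \<le> v \<bullet> (X *v v))}"

definition is_domain_set :: "(real^'p^'n) set \<Rightarrow> nat \<Rightarrow> (real^'p^'n) set \<Rightarrow> bool" where
  "is_domain_set Q k Xs \<longleftrightarrow>
     (\<exists>(t::nat) (F :: nat \<Rightarrow> real^'p^'n \<Rightarrow> real).
        (\<forall>j\<in>{1..t}. continuous_on Q (F j)) \<and>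
        Xs = {X \<in> Q. rank X \<le> k \<and> (\<forall>j\<in>{1..t}. F j X \<le> 0)})"

definition clconv :: "'a::euclidean_space set \<Rightarrow> 'a set" where
  "clconv S = closure (convex hull S)"

definition contains_line :: "'a::real_vector set \<Rightarrow> bool" where
  "contains_line S \<longleftrightarrow> (\<exists>x d. d \<noteq> 0 \<and> (\<forall>s::real. x + s *\<^sub>R d \<in> S))"

definition normal_cone :: "'a::real_inner set \<Rightarrow> 'a \<Rightarrow> 'a set" where
  "normal_cone D X = {G. \<forall>Y\<in>D. G \<bullet> (Y - X) \<le> 0}"

definition orth_proj :: "'a::euclidean_space set \<Rightarrow> 'a \<Rightarrow> 'a" where
  "orth_proj S x = (THE y. y \<in> span S \<and> (\<forall>z\<in>span S. (x - y) \<bullet> z = 0))"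

definition face_cond :: "'a::euclidean_space set \<Rightarrow> nat \<Rightarrow> bool" where
  "face_cond Xs mstar \<longleftrightarrow>
     (\<forall>F. F face_of clconv Xs \<and> aff_dim F \<le> int mstar \<longrightarrow> F \<subseteq> Xs)"

text \<open>Condition (b). Constraints indexed by [m] = {1..m}; right-hand sides b_i^u in (-inf,+inf]
  are extended reals different from -inf; the value of an infimum is taken in ereal.\<close>
definition lmi_cond :: "'a::euclidean_space set \<Rightarrow> nat \<Rightarrow> bool" where
  "lmi_cond Xs mstar \<longleftrightarrow>
   (\<forall>(m::nat) (A0::'a) (A::nat \<Rightarrow> 'a) (b::nat \<Rightarrow> ereal).
     let D = clconv Xs;
         C = {X \<in> Xs. \<forall>i\<in>{1..m}. ereal (A i \<bullet> X) \<le> b i};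
         Crel = {X \<in> D. \<forall>i\<in>{1..m}. ereal (A i \<bullet> X) \<le> b i};
         Vopt = (INF X\<in>C. ereal (A0 \<bullet> X));
         Vrel = (INF X\<in>Crel. ereal (A0 \<bullet> X))
     in ((\<forall>i\<in>{1..m}. b i \<noteq> -\<infinity>)
         \<and> Crel \<inter> rel_interior D \<noteq> {}
         \<and> -\<infinity> < Vrel
         \<and> bounded {X \<in> Crel. ereal (A0 \<bullet> X) = Vrel}
         \<and> (\<exists>Xstar (\<mu>::nat \<Rightarrow> real) T.
               Xstar \<in> Crel \<and> ereal (A0 \<bullet> Xstar) = Vrel
               \<and> (\<forall>i\<in>{1..m}. 0 \<le> \<mu> i)
               \<and> T = {i\<in>{1..m}. \<mu> i \<noteq> 0} \<and> card T = mstar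
               \<and> (\<forall>i\<in>{1..m}. ereal (A i \<bullet> Xstar) < b i \<longrightarrow> \<mu> i = 0)
               \<and> - A0 - (\<Sum>i\<in>T. \<mu> i *\<^sub>R A i) \<in> normal_cone D Xstar
               \<and> (\<exists>G. \<forall>j\<in>{1..m} - T. \<exists>c::real. 0 \<le> c \<and>
                        A j - orth_proj (A ` T) (A j) = c *\<^sub>R G)))
        \<longrightarrow> Vopt = Vrel)"

end

(*
  The equivalence holds for every closed set Xs in a Euclidean space.

  (a) implies (b): the optimal set of the relaxation is compact, convex and nonempty.
  Minimise over it the common direction G of the non-binding constraints and take an
  extreme point e of the minimisers; e lies in the relative interior of a face F of
  clconv Xs. If dim F > m*, then F contains a segment through e along which the m*
  binding constraints are constant. By complementary slackness e minimises the Lagrangian,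
  so the objective is constant along the segment as well, and the non-binding constraints
  vary only through G. Hence the half of the segment on which G does not increase stays
  optimal, minimality of G makes G constant on the segment, and the whole segment consists
  of minimisers, contradicting extremality of e. So dim F <= m*, hence F lies in Xs and
  e is feasible for the original problem.

  (b) implies (a): let x0 be a point outside the closed set Xs on a face F of dimension
  at most m*. Choose m* linear functionals a_i that are injective on the directions of F
  and vanish on a direction from x0 into the relative interior of clconv Xs. Then x0 is an
  extreme point of the slice of clconv Xs on which all a_i are constant, so a halfspace
  G X <= beta cuts that slice down to a small ball around x0 missing Xs. With constraints
  a_i X <= a_i x0 and G X <= beta and objective - sum a_i, the relaxation has optimum x0
  with multipliers 1 and satisfies (i)-(v), while by compactness every feasible point of
  Xs has objective value larger by a fixed gap.
*)
theory Submission
  imports Defs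
begin

lemma inner_le_max_on_closed_segment:
  fixes a :: "'a::real_inner"
  assumes "z \<in> closed_segment x y"
  shows "a \<bullet> z \<le> max (a \<bullet> x) (a \<bullet> y)"
  using closed_segment_subset[of x "{w. a \<bullet> w \<le> max (a \<bullet> x) (a \<bullet> y)}" y] assms
  by (auto simp: convex_halfspace_le)

lemma exists_closed_segment_dist_eq:
  fixes x y :: "'a::real_normed_vector"
  assumes "0 \<le> \<delta>" "\<delta> \<le> dist x y"
  obtains z where "z \<in> closed_segment x y" "dist x z = \<delta>"
proof -
  define t where "t = \<delta> / dist x y"
  have t: "0 \<le> t" "t \<le> 1"
    using assms by (auto simp: t_def divide_le_eq_1)
  define z where "z = (1 - t) *\<^sub>R x + t *\<^sub>R y"
  have "z \<in> closed_segment x y"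
    using t by (auto simp: z_def in_segment)
  moreover have "dist x z = \<delta>"
  proof -
    have "x - z = t *\<^sub>R (x - y)" by (simp add: z_def algebra_simps)
    then have "dist x z = t * dist x y" using t by (simp add: dist_norm)
    then show ?thesis using assms by (auto simp: t_def)
  qed
  ultimately show ?thesis using that by blast
qed

lemma in_open_segment_symmetric:
  fixes e d :: "'a::real_vector"
  assumes "d \<noteq> 0"
  shows "e \<in> open_segment (e - d) (e + d)"
proof -
  have "midpoint (e - d) (e + d) = e"
    by (simp add: midpoint_def scaleR_add_right[symmetric] scaleR_2[symmetric])
  moreover have "e - d \<noteq> e + d"
    using assms by (simp add: algebra_simps flip: scaleR_2)
  ultimately show ?thesis
    using midpoint_in_open_segment by metis
qed

lemma extreme_point_cut_off_by_halfspace: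
  fixes K :: "'a::euclidean_space set"
  assumes "closed K" "convex K" "x extreme_point_of K" "0 < \<delta>"
  obtains G \<beta> where "G \<bullet> x < \<beta>" "\<And>X. X \<in> K \<Longrightarrow> G \<bullet> X \<le> \<beta> \<Longrightarrow> dist x X < \<delta>"
proof -
  define Z where "Z = K \<inter> sphere x \<delta>"
  have "compact Z"
    unfolding Z_def using assms by (intro closed_Int_compact compact_sphere)
  have "x \<notin> convex hull Z"
  proof
    assume x: "x \<in> convex hull Z"
    have "convex hull Z \<subseteq> K"
      using assms by (intro hull_minimal) (auto simp: Z_def)
    then have "x extreme_point_of convex hull Z"
      using x assms(3) by (auto simp: extreme_point_of_def)
    then have "x \<in> Z" by (rule extreme_point_of_convex_hull)
    then show False using assms(4) by (simp add: Z_def)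
  qed
  then obtain G \<beta> where G: "G \<bullet> x < \<beta>" "\<And>z. z \<in> convex hull Z \<Longrightarrow> \<beta> < G \<bullet> z"
    using separating_hyperplane_closed_point[OF convex_convex_hull]
      compact_imp_closed[OF compact_convex_hull[OF \<open>compact Z\<close>]] by metis
  have "dist x X < \<delta>" if X: "X \<in> K" "G \<bullet> X \<le> \<beta>" for X
  proof (rule ccontr)
    assume "\<not> dist x X < \<delta>"
    then obtain z where z: "z \<in> closed_segment x X" "dist x z = \<delta>"
      using exists_closed_segment_dist_eq assms(4) by (metis less_eq_real_def not_le)
    have "x \<in> K" using assms(3) by (simp add: extreme_point_of_def)
    then have "z \<in> Z"
      using z closed_segment_subset[OF _ X(1) assms(2)]
      by (auto simp: Z_def)
    then have "\<beta> < G \<bullet> z" by (simp add: G(2) hull_inc)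
    moreover have "G \<bullet> z \<le> max (G \<bullet> x) (G \<bullet> X)"
      by (rule inner_le_max_on_closed_segment[OF z(1)])
    ultimately show False using G(1) X(2) by linarith
  qed
  with G(1) that show ?thesis by blast
qed

lemma linear_gap_outside_ball:
  fixes S :: "'a::euclidean_space set"
  assumes "closed S" "convex S" "x \<in> S"
    and min: "\<And>X. X \<in> S \<Longrightarrow> c \<bullet> x \<le> c \<bullet> X"
    and argmin_near: "\<And>X. X \<in> S \<Longrightarrow> c \<bullet> X = c \<bullet> x \<Longrightarrow> dist x X < \<delta>"
  obtains \<gamma> where "0 < \<gamma>" "\<And>X. X \<in> S \<Longrightarrow> \<delta> \<le> dist x X \<Longrightarrow> c \<bullet> x + \<gamma> \<le> c \<bullet> X"
proof -
  define Z where "Z = S \<inter> sphere x \<delta>"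
  obtain \<gamma> where \<gamma>: "0 < \<gamma>" "\<And>z. z \<in> Z \<Longrightarrow> c \<bullet> x + \<gamma> \<le> c \<bullet> z"
  proof (cases "Z = {}")
    case True
    then show ?thesis using that[of 1] by simp
  next
    case False
    have "compact Z"
      unfolding Z_def using assms(1) by (intro closed_Int_compact compact_sphere)
    then obtain z0 where z0: "z0 \<in> Z" "\<And>z. z \<in> Z \<Longrightarrow> c \<bullet> z0 \<le> c \<bullet> z"
      using continuous_attains_inf[OF _ False continuous_on_inner[OF continuous_on_const continuous_on_id]]
      by metis
    have "c \<bullet> z0 \<noteq> c \<bullet> x"
      using argmin_near[of z0] z0(1) by (auto simp: Z_def)
    with min[of z0] z0(1) have "c \<bullet> x < c \<bullet> z0" by (simp add: Z_def)
    then show ?thesis using that[of "c \<bullet> z0 - c \<bullet> x"] z0(2) by fastforce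
  qed
  have "c \<bullet> x + \<gamma> \<le> c \<bullet> X" if X: "X \<in> S" "\<delta> \<le> dist x X" for X
  proof -
    have "0 < \<delta>"
      using argmin_near[OF assms(3)] by simp
    then obtain z where z: "z \<in> closed_segment x X" "dist x z = \<delta>"
      using exists_closed_segment_dist_eq X(2) by (metis less_imp_le)
    have "z \<in> Z"
      using z closed_segment_subset[OF assms(3) X(1) assms(2)] by (auto simp: Z_def)
    then have "c \<bullet> x + \<gamma> \<le> c \<bullet> z" by (rule \<gamma>(2))
    also have "\<dots> \<le> max (c \<bullet> x) (c \<bullet> X)"
      by (rule inner_le_max_on_closed_segment[OF z(1)])
    finally show ?thesis using \<gamma>(1) by linarith
  qed
  with \<gamma>(1) that show ?thesis by blast
qed

lemma subspace_exists_nonzero_orthogonal: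
  fixes W :: "'a::euclidean_space set"
  assumes "subspace W" "finite V" "card V < dim W"
  obtains d where "d \<in> W" "d \<noteq> 0" "\<And>v. v \<in> V \<Longrightarrow> v \<bullet> d = 0"
proof -
  define N where "N = {y. \<forall>v\<in>span V. orthogonal v y}"
  have "subspace N"
    by (auto simp: N_def subspace_def orthogonal_clauses)
  have "dim N + dim V = DIM('a)"
    using dim_subspace_orthogonal_to_vectors[of "span V" UNIV] by (simp add: N_def)
  moreover have "dim V \<le> card V"
    using dim_le_card[OF span_superset assms(2)] .
  moreover have "dim {w + y |w y. w \<in> W \<and> y \<in> N} \<le> DIM('a)"
    by (rule dim_subset_UNIV)
  moreover have "dim {w + y |w y. w \<in> W \<and> y \<in> N} + dim (W \<inter> N) = dim W + dim N"
    by (rule dim_sums_Int[OF assms(1) \<open>subspace N\<close>])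
  ultimately have "dim (W \<inter> N) \<noteq> 0"
    using assms(3) by linarith
  then obtain d where "d \<in> W \<inter> N" "d \<noteq> 0"
    by (auto simp: dim_eq_0)
  then show ?thesis
    using that by (auto simp: N_def orthogonal_def span_base inner_commute)
qed

lemma functionals_injective_on_subspace_vanishing_at:
  fixes W :: "'a::euclidean_space set"
  assumes "subspace W" "dim W \<le> n" "u \<in> W \<Longrightarrow> u = 0"
  obtains a :: "nat \<Rightarrow> 'a"
    where "\<And>i. a i \<bullet> u = 0" "\<And>w. w \<in> W \<Longrightarrow> \<forall>i\<in>{1..n}. a i \<bullet> w = 0 \<Longrightarrow> w = 0"
proof -
  obtain B where B: "B \<subseteq> W" "independent B" "W \<subseteq> span B" "card B = dim W"
    using basis_exists by blast
  obtain g where g: "bij_betw g {1..card B} B"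
    using ex_bij_betw_nat_finite_1 independent_bound[OF B(2)] by blast
  obtain uW up where up: "uW \<in> span W" "\<And>w. w \<in> span W \<Longrightarrow> orthogonal up w" "u = uW + up"
    using orthogonal_subspace_decomp_exists by blast
  \<comment> \<open>Subtracting a multiple of up \<bottom> W leaves g i unchanged on W and makes it vanish at u.
      If up = 0 then u \<in> W, so u = 0, and the division by zero is harmless.\<close>
  define a where "a i = g i - ((g i \<bullet> u) / (up \<bullet> up)) *\<^sub>R up" for i
  have "a i \<bullet> u = 0" for i
  proof (cases "up = 0")
    case True
    then show ?thesis
      using up(1,3) assms(3) span_eq_iff[THEN iffD2, OF assms(1)] by (simp add: a_def)
  next
    case False
    have "up \<bullet> u = up \<bullet> up"
      using up by (simp add: inner_add_right orthogonal_def)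
    then show ?thesis using False by (simp add: a_def inner_diff_left)
  qed
  moreover have "w = 0" if w: "w \<in> W" "\<forall>i\<in>{1..n}. a i \<bullet> w = 0" for w
  proof -
    have "up \<bullet> w = 0"
      using up(2) w(1) by (simp add: orthogonal_def span_base)
    then have "b \<bullet> w = 0" if "b \<in> B" for b
      using that g w(2) B(4) assms(2) unfolding bij_betw_def a_def
      by (force simp: inner_diff_left)
    then have "orthogonal w w"
      using orthogonal_to_span[of w B w] B(3) w(1) by (auto simp: orthogonal_def inner_commute)
    then show ?thesis by (simp add: orthogonal_def)
  qed
  ultimately show ?thesis using that by blast
qed

lemma orth_proj_in_span: "orth_proj S x \<in> span S"
proof -
  obtain y z where yz: "y \<in> span S" "\<And>w. w \<in> span S \<Longrightarrow> orthogonal z w" "x = y + z"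
    using orthogonal_subspace_decomp_exists by blast
  have ex1: "\<exists>!y. y \<in> span S \<and> (\<forall>w\<in>span S. (x - y) \<bullet> w = 0)"
  proof (rule ex1I[of _ y])
    show "y \<in> span S \<and> (\<forall>w\<in>span S. (x - y) \<bullet> w = 0)"
      using yz by (simp add: orthogonal_def)
  next
    fix y' assume y': "y' \<in> span S \<and> (\<forall>w\<in>span S. (x - y') \<bullet> w = 0)"
    then have "y - y' \<in> span S"
      using yz(1) span_diff by blast
    then have "(x - y') \<bullet> (y - y') = 0" "(x - y) \<bullet> (y - y') = 0"
      using y' yz by (auto simp: orthogonal_def)
    then have "(y - y') \<bullet> (y - y') = 0"
      by (simp add: inner_diff_left)
    then show "y' = y" by simp
  qed
  then show ?thesis
    unfolding orth_proj_def using theI'[OF ex1] by blast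
qed

lemma exists_face_of_rel_interior:
  fixes D :: "'a::euclidean_space set"
  assumes "convex D" "x \<in> D"
  obtains F where "F face_of D" "x \<in> rel_interior F"
proof -
  let ?P = "\<lambda>F. F face_of D \<and> x \<in> F"
  obtain F where F: "?P F" and least: "\<And>F'. ?P F' \<Longrightarrow> nat (aff_dim F + 1) \<le> nat (aff_dim F' + 1)"
    using ex_has_least_nat[of ?P D "\<lambda>F. nat (aff_dim F + 1)"] assms face_of_refl by blast
  have "convex F" using F face_of_imp_convex by blast
  have "x \<in> rel_interior F"
  proof (rule ccontr)
    assume "x \<notin> rel_interior F"
    \<comment> \<open>then a supporting hyperplane at x cuts out a face of F of smaller dimension\<close>
    then obtain a where a: "\<And>y. y \<in> F \<Longrightarrow> a \<bullet> x \<le> a \<bullet> y" "\<And>y. y \<in> rel_interior F \<Longrightarrow> a \<bullet> x < a \<bullet> y"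
      using supporting_hyperplane_rel_boundary[OF \<open>convex F\<close>] F by metis
    define F' where "F' = F \<inter> {y. a \<bullet> y = a \<bullet> x}"
    have "F' face_of F"
      unfolding F'_def using a(1) by (intro face_of_Int_supporting_hyperplane_ge \<open>convex F\<close>) auto
    then have "?P F'"
      using F face_of_trans by (auto simp: F'_def)
    obtain y where "y \<in> rel_interior F"
      using rel_interior_eq_empty \<open>convex F\<close> F by blast
    then have "F' \<noteq> F"
      using a(2) rel_interior_subset by (force simp: F'_def)
    then have "aff_dim F' < aff_dim F"
      by (rule face_of_aff_dim_lt[OF \<open>convex F\<close> \<open>F' face_of F\<close>])
    with least[OF \<open>?P F'\<close>] aff_dim_geq[of F'] show False by linarith
  qed
  with F that show ?thesis by blast
qed

lemma rel_interior_exists_orthogonal_segment: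
  fixes F :: "'a::euclidean_space set"
  assumes "e \<in> rel_interior F" "finite V" "int (card V) < aff_dim F"
  obtains d where "d \<noteq> 0" "e + d \<in> F" "e - d \<in> F" "\<And>v. v \<in> V \<Longrightarrow> v \<bullet> d = 0"
proof -
  have e: "e \<in> affine hull F"
    using hull_inc[OF rel_interior_subset[THEN subsetD, OF assms(1)]] .
  have "card V < dim (span ((+) (- e) ` F))"
    using assms(3) aff_dim_eq_dim[OF e] by simp
  then obtain d0 where d0: "d0 \<in> span ((+) (- e) ` F)" "d0 \<noteq> 0" "\<And>v. v \<in> V \<Longrightarrow> v \<bullet> d0 = 0"
    using subspace_exists_nonzero_orthogonal[OF subspace_span assms(2)] by blast
  obtain \<epsilon> where \<epsilon>: "0 < \<epsilon>" "ball e \<epsilon> \<inter> affine hull F \<subseteq> F"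
    using assms(1) mem_rel_interior_ball by blast
  define d where "d = (\<epsilon> / (2 * norm d0)) *\<^sub>R d0"
  have "norm d < \<epsilon>"
    using \<epsilon>(1) d0(2) by (simp add: d_def)
  have in_F: "e + s \<in> F" if "s = d \<or> s = - d" for s
  proof -
    have "s \<in> span ((+) (- e) ` F)"
      using that d0(1) by (auto simp: d_def span_mul span_neg)
    then have "e + s \<in> affine hull F"
      unfolding affine_hull_span_gen[OF e] by (rule imageI)
    moreover have "e + s \<in> ball e \<epsilon>"
      using that \<open>norm d < \<epsilon>\<close> by (auto simp: dist_norm)
    ultimately show ?thesis
      using \<epsilon>(2) by blast
  qed
  show ?thesis
  proof (rule that)
    show "d \<noteq> 0"
      using \<epsilon>(1) d0(2) by (simp add: d_def)
    show "e + d \<in> F" "e - d \<in> F"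
      using in_F[of d] in_F[of "- d"] by simp_all
    show "v \<bullet> d = 0" if "v \<in> V" for v
      using d0(3)[OF that] by (simp add: d_def)
  qed
qed

lemma extreme_point_of_face_slice:
  fixes D :: "'a::euclidean_space set"
  assumes "F face_of D" "x \<in> F"
    and "\<And>w. w \<in> span ((+) (- x) ` F) \<Longrightarrow> \<forall>i\<in>I. a i \<bullet> w = 0 \<Longrightarrow> w = 0"
  shows "x extreme_point_of {X \<in> D. \<forall>i\<in>I. a i \<bullet> X = a i \<bullet> x}"
  unfolding extreme_point_of_def
proof (intro conjI ballI)
  show "x \<in> {X \<in> D. \<forall>i\<in>I. a i \<bullet> X = a i \<bullet> x}"
    using assms(1,2) face_of_imp_subset by blast
next
  fix p q assume pq: "p \<in> {X \<in> D. \<forall>i\<in>I. a i \<bullet> X = a i \<bullet> x}" "q \<in> {X \<in> D. \<forall>i\<in>I. a i \<bullet> X = a i \<bullet> x}"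
  show "x \<notin> open_segment p q"
  proof
    assume x: "x \<in> open_segment p q"
    then have "p \<in> F"
      using face_ofD[OF assms(1) x] pq assms(2) by blast
    then have "- x + p \<in> span ((+) (- x) ` F)"
      by (simp add: span_base)
    moreover have "\<forall>i\<in>I. a i \<bullet> (- x + p) = 0"
      using pq(1) by (simp add: inner_diff_right)
    ultimately have "p = x"
      using assms(3) by fastforce
    with x show False by (simp add: open_segment_def)
  qed
qed

lemma exists_rel_interior_point_off_face:
  fixes D :: "'a::euclidean_space set"
  assumes "convex D" "F face_of D" "x \<in> F" "F = D \<Longrightarrow> x \<in> rel_interior D"
  obtains y where "y \<in> rel_interior D" "- x + y \<in> span ((+) (- x) ` F) \<Longrightarrow> y = x"
proof (cases "x \<in> rel_interior D")
  case True
  then show ?thesis using that by blast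
next
  case False
  then have "F \<noteq> D" using assms(4) by blast
  then have disj: "affine hull F \<inter> rel_interior D = {}"
    using affine_hull_face_of_disjoint_rel_interior[OF assms(1,2)] by blast
  have "x \<in> D"
    using subsetD[OF face_of_imp_subset[OF assms(2)] assms(3)] .
  then have "rel_interior D \<noteq> {}"
    using rel_interior_eq_empty[OF assms(1)] by auto
  then obtain y where y: "y \<in> rel_interior D"
    by blast
  have "- x + y \<notin> span ((+) (- x) ` F)"
  proof
    assume "- x + y \<in> span ((+) (- x) ` F)"
    then have "x + (- x + y) \<in> affine hull F"
      unfolding affine_hull_span_gen[OF hull_inc[OF assms(3)]] by (rule imageI)
    with disj y show False
      by auto
  qed
  then show ?thesis using that y by blast
qed

lemma closed_clconv: "closed (clconv S)"
  by (simp add: clconv_def)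

lemma convex_clconv: "convex (clconv S)"
  by (simp add: clconv_def convex_closure)

lemma clconv_superset: "S \<subseteq> clconv S"
  unfolding clconv_def by (rule order_trans[OF hull_subset closure_subset])

lemma closed_ereal_halfspace_le: "closed {X. ereal (a \<bullet> X) \<le> b}"
  by (cases b) (auto simp: closed_halfspace_le)

lemma convex_ereal_halfspace_le: "convex {X. ereal (a \<bullet> X) \<le> b}"
  by (cases b) (auto simp: convex_halfspace_le)

lemma exists_extreme_minimiser:
  fixes S :: "'a::euclidean_space set"
  assumes "compact S" "convex S" "S \<noteq> {}"
  obtains e where "e extreme_point_of {X \<in> S. G \<bullet> X = G \<bullet> e}" "\<And>X. X \<in> S \<Longrightarrow> G \<bullet> e \<le> G \<bullet> X"
proof -
  have "continuous_on S ((\<bullet>) G)"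
    by (intro continuous_intros)
  then obtain x1 where x1: "x1 \<in> S" "\<And>X. X \<in> S \<Longrightarrow> G \<bullet> x1 \<le> G \<bullet> X"
    using continuous_attains_inf[OF assms(1,3)] by blast
  define K where "K = S \<inter> {X. G \<bullet> X = G \<bullet> x1}"
  have "compact K"
    unfolding K_def using closed_Int_compact[OF closed_hyperplane assms(1)] by (simp add: Int_commute)
  moreover have "convex K"
    unfolding K_def by (intro convex_Int assms(2) convex_hyperplane)
  moreover have "K \<noteq> {}"
    using x1(1) by (auto simp: K_def)
  ultimately obtain e where e: "e extreme_point_of K"
    using extreme_point_exists_convex by blast
  have "G \<bullet> e = G \<bullet> x1"
    using e by (auto simp: extreme_point_of_def K_def)
  show ?thesis
  proof (rule that)
    show "e extreme_point_of {X \<in> S. G \<bullet> X = G \<bullet> e}"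
      using e \<open>G \<bullet> e = G \<bullet> x1\<close> by (simp add: K_def Int_def)
    show "G \<bullet> e \<le> G \<bullet> X" if "X \<in> S" for X
      using x1(2)[OF that] \<open>G \<bullet> e = G \<bullet> x1\<close> by simp
  qed
qed

lemma lagrangian_min_at_optimum:
  fixes D :: "'a::euclidean_space set" and A :: "nat \<Rightarrow> 'a"
  assumes "\<And>i. i \<in> T \<Longrightarrow> 0 \<le> \<mu> i"
    and "\<And>i. i \<in> T \<Longrightarrow> ereal (A i \<bullet> e) \<le> b i" "\<And>i. i \<in> T \<Longrightarrow> b i = ereal (A i \<bullet> Xstar)"
    and "A0 \<bullet> e = A0 \<bullet> Xstar" "- A0 - (\<Sum>i\<in>T. \<mu> i *\<^sub>R A i) \<in> normal_cone D Xstar" "Y \<in> D"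
  shows "(A0 + (\<Sum>i\<in>T. \<mu> i *\<^sub>R A i)) \<bullet> e \<le> (A0 + (\<Sum>i\<in>T. \<mu> i *\<^sub>R A i)) \<bullet> Y"
proof -
  define l where "l = A0 + (\<Sum>i\<in>T. \<mu> i *\<^sub>R A i)"
  have "(\<Sum>i\<in>T. \<mu> i * (A i \<bullet> e)) \<le> (\<Sum>i\<in>T. \<mu> i * (A i \<bullet> Xstar))"
    using assms(1-3) by (intro sum_mono mult_left_mono) auto
  then have "l \<bullet> e \<le> l \<bullet> Xstar"
    using assms(4) by (simp add: l_def inner_add_left inner_sum_left)
  also have "\<dots> \<le> l \<bullet> Y"
  proof -
    have "(- l) \<bullet> (Y - Xstar) \<le> 0"
      using assms(5,6) by (simp add: normal_cone_def l_def)
    then show ?thesis by (simp add: inner_diff_right)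
  qed
  finally show ?thesis
    by (simp add: l_def)
qed

lemma constraints_feasible_direction:
  fixes A :: "nat \<Rightarrow> 'a::euclidean_space"
  assumes "\<forall>i\<in>I. ereal (A i \<bullet> e) \<le> b i"
    and "\<And>i. i \<in> T \<Longrightarrow> A i \<bullet> s = 0" "G \<bullet> s \<le> 0"
    and parallel: "\<And>j. j \<in> I - T \<Longrightarrow> \<exists>c\<ge>0. A j - c *\<^sub>R G \<in> span (A ` T)"
  shows "\<forall>i\<in>I. ereal (A i \<bullet> (e + s)) \<le> b i"
proof
  fix i assume i: "i \<in> I"
  have "A i \<bullet> s \<le> 0"
  proof (cases "i \<in> T")
    case True
    then show ?thesis using assms(2) by simp
  next
    case False
    then obtain c where c: "0 \<le> c" "A i - c *\<^sub>R G \<in> span (A ` T)"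
      using parallel i by blast
    have "orthogonal s (A i - c *\<^sub>R G)"
      by (rule orthogonal_to_span[OF c(2)]) (use assms(2) in \<open>auto simp: orthogonal_def inner_commute\<close>)
    then have "s \<bullet> A i = c * (s \<bullet> G)"
      by (simp add: orthogonal_def inner_diff_right)
    then show ?thesis
      using c(1) assms(3) by (simp add: inner_commute mult_nonneg_nonpos)
  qed
  then have "ereal (A i \<bullet> (e + s)) \<le> ereal (A i \<bullet> e)"
    by (simp add: inner_add_right)
  also have "\<dots> \<le> b i"
    using assms(1) i by blast
  finally show "ereal (A i \<bullet> (e + s)) \<le> b i" .
qed

lemma exists_optimal_point_on_low_dimensional_face:
  fixes D :: "'a::euclidean_space set" and A :: "nat \<Rightarrow> 'a" and b :: "nat \<Rightarrow> ereal" and I :: "nat set"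
  defines "Crel \<equiv> {X \<in> D. \<forall>i\<in>I. ereal (A i \<bullet> X) \<le> b i}"
  assumes "closed D" "convex D" "finite T" "T \<subseteq> I"
    and bounded: "bounded {X \<in> Crel. A0 \<bullet> X = A0 \<bullet> Xstar}"
    and opt: "Xstar \<in> Crel" "\<And>X. X \<in> Crel \<Longrightarrow> A0 \<bullet> Xstar \<le> A0 \<bullet> X"
    and mult: "\<And>i. i \<in> T \<Longrightarrow> 0 \<le> \<mu> i"
    and slack: "\<And>i. i \<in> T \<Longrightarrow> b i = ereal (A i \<bullet> Xstar)"
    and normal: "- A0 - (\<Sum>i\<in>T. \<mu> i *\<^sub>R A i) \<in> normal_cone D Xstar"
    and parallel: "\<And>j. j \<in> I - T \<Longrightarrow> \<exists>c\<ge>0. A j - c *\<^sub>R G \<in> span (A ` T)"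
  obtains F e where "F face_of D" "e \<in> rel_interior F" "aff_dim F \<le> int (card T)"
    "e \<in> Crel" "A0 \<bullet> e = A0 \<bullet> Xstar"
proof -
  define S where "S = {X \<in> Crel. A0 \<bullet> X = A0 \<bullet> Xstar}"
  have S_eq: "S = D \<inter> (\<Inter>i\<in>I. {X. ereal (A i \<bullet> X) \<le> b i}) \<inter> {X. A0 \<bullet> X = A0 \<bullet> Xstar}"
    by (auto simp: S_def Crel_def)
  have "closed S"
    unfolding S_eq by (intro closed_Int assms(2) closed_INT ballI closed_ereal_halfspace_le closed_hyperplane)
  then have "compact S"
    using bounded by (simp add: S_def compact_eq_bounded_closed)
  moreover have "convex S"
    unfolding S_eq by (intro convex_Int assms(3) convex_INT ballI convex_ereal_halfspace_le convex_hyperplane)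
  moreover have "S \<noteq> {}"
    using opt(1) by (auto simp: S_def)
  \<comment> \<open>Among the optimal points, minimise the direction G shared by the non-binding constraints.\<close>
  ultimately obtain e where e: "e extreme_point_of {X \<in> S. G \<bullet> X = G \<bullet> e}"
    and G_min: "\<And>X. X \<in> S \<Longrightarrow> G \<bullet> e \<le> G \<bullet> X"
    using exists_extreme_minimiser[where G = G] by blast
  then have eC: "e \<in> Crel" "A0 \<bullet> e = A0 \<bullet> Xstar"
    by (auto simp: extreme_point_of_def S_def)
  then obtain F where F: "F face_of D" "e \<in> rel_interior F"
    using exists_face_of_rel_interior[OF assms(3)] by (auto simp: Crel_def)
  have "aff_dim F \<le> int (card T)"
  proof (rule ccontr)
    assume "\<not> ?thesis"
    with card_image_le[OF \<open>finite T\<close>, of A] have "int (card (A ` T)) < aff_dim F"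
      by linarith
    then obtain d where d: "d \<noteq> 0" "e + d \<in> F" "e - d \<in> F" "\<And>v. v \<in> A ` T \<Longrightarrow> v \<bullet> d = 0"
      using rel_interior_exists_orthogonal_segment[OF F(2) finite_imageI[OF \<open>finite T\<close>]] by blast
    have Ad: "\<And>i. i \<in> T \<Longrightarrow> A i \<bullet> d = 0"
      using d(4) by blast
    have "e + d \<in> D" "e - d \<in> D"
      using d(2,3) F(1) face_of_imp_subset by blast+
    \<comment> \<open>By complementary slackness e minimises the Lagrangian over D, so the objective is constant on the segment.\<close>
    have l_min: "(A0 + (\<Sum>i\<in>T. \<mu> i *\<^sub>R A i)) \<bullet> e \<le> (A0 + (\<Sum>i\<in>T. \<mu> i *\<^sub>R A i)) \<bullet> Y"
      if "Y \<in> D" for Y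
      by (rule lagrangian_min_at_optimum[where \<mu> = \<mu> and b = b, OF mult _ slack eC(2) normal that])
        (use eC(1) \<open>T \<subseteq> I\<close> in \<open>auto simp: Crel_def\<close>)
    have A0d: "A0 \<bullet> d = 0"
      using l_min[OF \<open>e + d \<in> D\<close>] l_min[OF \<open>e - d \<in> D\<close>] Ad
      by (simp add: inner_add_right inner_diff_right inner_add_left inner_sum_left)
    have in_S: "e + s \<in> S" if s: "s = d \<or> s = - d" "G \<bullet> s \<le> 0" for s
    proof -
      have "\<forall>i\<in>I. ereal (A i \<bullet> (e + s)) \<le> b i"
        by (rule constraints_feasible_direction[OF _ _ s(2) parallel]) (use eC(1) Ad s(1) in \<open>auto simp: Crel_def\<close>)
      moreover have "e + s \<in> D"
        using s(1) \<open>e + d \<in> D\<close> \<open>e - d \<in> D\<close> by auto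
      ultimately show ?thesis
        using eC A0d s(1) by (auto simp: S_def Crel_def inner_add_right)
    qed
    have G_zero: "G \<bullet> s = 0" if "s = d \<or> s = - d" "G \<bullet> s \<le> 0" for s
      using G_min[OF in_S[OF that]] that(2) by (simp add: inner_add_right)
    have "G \<bullet> d = 0"
      using G_zero[of d] G_zero[of "- d"] by (cases "G \<bullet> d \<le> 0") auto
    then have "e + d \<in> {X \<in> S. G \<bullet> X = G \<bullet> e}" "e - d \<in> {X \<in> S. G \<bullet> X = G \<bullet> e}"
      using in_S[of d] in_S[of "- d"] by (auto simp: inner_add_right inner_diff_right)
    then show False
      using e in_open_segment_symmetric[OF d(1), of e] by (auto simp: extreme_point_of_def)
  qed
  with F eC that show ?thesis by blast
qed

lemma lmi_cond_if_face_cond: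
  fixes Xs :: "'a::euclidean_space set"
  assumes "face_cond Xs mstar"
  shows "lmi_cond Xs mstar"
  unfolding lmi_cond_def Let_def
  apply (intro allI impI, elim conjE exE)
  subgoal premises H for m A0 A b Xstar \<mu> T G
  proof -
    let ?Crel = "{X \<in> clconv Xs. \<forall>i\<in>{1..m}. ereal (A i \<bullet> X) \<le> b i}"
    let ?C = "{X \<in> Xs. \<forall>i\<in>{1..m}. ereal (A i \<bullet> X) \<le> b i}"
    have Vrel: "(INF X\<in>?Crel. ereal (A0 \<bullet> X)) = ereal (A0 \<bullet> Xstar)"
      using H(6) by simp
    have opt: "A0 \<bullet> Xstar \<le> A0 \<bullet> X" if "X \<in> ?Crel" for X
      using INF_lower[OF that, of "\<lambda>X. ereal (A0 \<bullet> X)"] Vrel by simp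
    have bounded: "bounded {X \<in> ?Crel. A0 \<bullet> X = A0 \<bullet> Xstar}"
      using H(4) Vrel by simp
    have T: "finite T" "T \<subseteq> {1..m}"
      using H(8) by auto
    have mult: "0 \<le> \<mu> i" if "i \<in> T" for i
      using H(7) T(2) that by blast
    have slack: "b i = ereal (A i \<bullet> Xstar)" if "i \<in> T" for i
    proof -
      have i: "i \<in> {1..m}" "\<mu> i \<noteq> 0"
        using H(8) that by auto
      then have "ereal (A i \<bullet> Xstar) \<le> b i" "\<not> ereal (A i \<bullet> Xstar) < b i"
        using H(5,10) by auto
      then show ?thesis by (intro antisym) (simp_all add: not_less)
    qed
    have parallel: "\<exists>c\<ge>0. A j - c *\<^sub>R G \<in> span (A ` T)" if j: "j \<in> {1..m} - T" for j
    proof -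
      obtain c where c: "0 \<le> c" "A j - orth_proj (A ` T) (A j) = c *\<^sub>R G"
        using bspec[OF H(12) j] by blast
      have "A j - c *\<^sub>R G = orth_proj (A ` T) (A j)"
        unfolding c(2)[symmetric] by simp
      with c(1) show ?thesis
        using orth_proj_in_span by (intro exI[of _ c]) simp
    qed
    obtain F e where F: "F face_of clconv Xs" "e \<in> rel_interior F" "aff_dim F \<le> int (card T)"
      and e: "e \<in> ?Crel" "A0 \<bullet> e = A0 \<bullet> Xstar"
      using exists_optimal_point_on_low_dimensional_face[OF closed_clconv convex_clconv T bounded
          H(5) opt mult slack H(11) parallel] by blast
    have "F \<subseteq> Xs"
      using assms F H(9) by (auto simp: face_cond_def)
    with F(2) e(1) have "e \<in> ?C"
      using rel_interior_subset by blast
    then have "(INF X\<in>?C. ereal (A0 \<bullet> X)) \<le> (INF X\<in>?Crel. ereal (A0 \<bullet> X))"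
      using INF_lower[of e ?C "\<lambda>X. ereal (A0 \<bullet> X)"] e(2) Vrel by simp
    moreover have "(INF X\<in>?Crel. ereal (A0 \<bullet> X)) \<le> (INF X\<in>?C. ereal (A0 \<bullet> X))"
      by (rule INF_superset_mono) (use clconv_superset[of Xs] in auto)
    ultimately show ?thesis by (rule antisym)
  qed
  done

lemma exists_rel_interior_point_towards:
  fixes D :: "'a::euclidean_space set"
  assumes "convex D" "x0 \<in> D" "x0 + u \<in> rel_interior D" "G \<bullet> x0 < \<beta>"
  obtains t where "0 < t" "x0 + t *\<^sub>R u \<in> rel_interior D" "G \<bullet> (x0 + t *\<^sub>R u) < \<beta>"
proof -
  define t where "t = min 1 ((\<beta> - G \<bullet> x0) / (\<bar>G \<bullet> u\<bar> + 1))"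
  have t: "0 < t" "t \<le> 1"
    using assms(4) by (auto simp: t_def)
  have "t * \<bar>G \<bullet> u\<bar> \<le> (\<beta> - G \<bullet> x0) / (\<bar>G \<bullet> u\<bar> + 1) * \<bar>G \<bullet> u\<bar>"
    by (intro mult_right_mono) (auto simp: t_def)
  also have "\<dots> < \<beta> - G \<bullet> x0"
    using assms(4) by (simp add: field_simps)
  finally have "t * (G \<bullet> u) < \<beta> - G \<bullet> x0"
    using mult_left_mono[OF abs_ge_self[of "G \<bullet> u"], of t] t(1) by linarith
  then have "G \<bullet> (x0 + t *\<^sub>R u) < \<beta>"
    by (simp add: inner_add_right)
  moreover have "x0 + t *\<^sub>R u \<in> rel_interior D"
    using rel_interior_closure_convex_shrink[OF assms(1,3) closure_subset[THEN subsetD, OF assms(2)] t]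
    by (simp add: algebra_simps)
  ultimately show ?thesis
    using that t(1) by blast
qed

lemma face_exists_isolating_slice:
  fixes D :: "'a::euclidean_space set"
  assumes "closed D" "convex D" "F face_of D" "aff_dim F \<le> int n" "x0 \<in> F"
    and "F = D \<Longrightarrow> x0 \<in> rel_interior D" "0 < \<delta>"
  obtains G \<beta> a y
  where "G \<bullet> x0 < \<beta>"
    and "\<And>X. X \<in> D \<Longrightarrow> \<forall>i\<in>{1..n}. a i \<bullet> X = a i \<bullet> x0 \<Longrightarrow> G \<bullet> X \<le> \<beta> \<Longrightarrow> dist x0 X < \<delta>"
    and "y \<in> rel_interior D" "\<forall>i\<in>{1..n}. a i \<bullet> y = a i \<bullet> x0" "G \<bullet> y \<le> \<beta>"
proof -
  obtain y0 where y0: "y0 \<in> rel_interior D" "- x0 + y0 \<in> span ((+) (- x0) ` F) \<Longrightarrow> y0 = x0"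
    using exists_rel_interior_point_off_face[OF assms(2,3,5,6)] by blast
  define u where "u = - x0 + y0"
  have "aff_dim F = int (dim (span ((+) (- x0) ` F)))"
    using aff_dim_eq_dim[OF hull_inc[OF assms(5)]] by simp
  then have "dim (span ((+) (- x0) ` F)) \<le> n"
    using assms(4) by linarith
  moreover have "u \<in> span ((+) (- x0) ` F) \<Longrightarrow> u = 0"
    using y0(2) by (simp add: u_def)
  ultimately obtain a where a: "\<And>i. a i \<bullet> u = 0"
      "\<And>w. w \<in> span ((+) (- x0) ` F) \<Longrightarrow> \<forall>i\<in>{1..n}. a i \<bullet> w = 0 \<Longrightarrow> w = 0"
    using functionals_injective_on_subspace_vanishing_at[OF subspace_span] by blast
  define K where "K = {X \<in> D. \<forall>i\<in>{1..n}. a i \<bullet> X = a i \<bullet> x0}"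
  have K_eq: "K = D \<inter> (\<Inter>i\<in>{1..n}. {X. a i \<bullet> X = a i \<bullet> x0})"
    by (auto simp: K_def)
  have "closed K"
    unfolding K_eq by (intro closed_Int assms(1) closed_INT ballI closed_hyperplane)
  moreover have "convex K"
    unfolding K_eq by (intro convex_Int assms(2) convex_INT ballI convex_hyperplane)
  moreover have "x0 extreme_point_of K"
    unfolding K_def using extreme_point_of_face_slice[OF assms(3,5) a(2)] .
  ultimately obtain G \<beta> where G: "G \<bullet> x0 < \<beta>" "\<And>X. X \<in> K \<Longrightarrow> G \<bullet> X \<le> \<beta> \<Longrightarrow> dist x0 X < \<delta>"
    using extreme_point_cut_off_by_halfspace assms(7) by blast
  have "x0 \<in> D"
    using subsetD[OF face_of_imp_subset[OF assms(3)] assms(5)] .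
  moreover have "x0 + u \<in> rel_interior D"
    using y0(1) by (simp add: u_def)
  ultimately obtain t where t: "x0 + t *\<^sub>R u \<in> rel_interior D" "G \<bullet> (x0 + t *\<^sub>R u) < \<beta>"
    using exists_rel_interior_point_towards[OF assms(2) _ _ G(1)] by blast
  have "\<forall>i\<in>{1..n}. a i \<bullet> (x0 + t *\<^sub>R u) = a i \<bullet> x0"
    using a(1) by (simp add: inner_add_right)
  then show ?thesis
    using that[of G \<beta> a "x0 + t *\<^sub>R u"] G t by (auto simp: K_def)
qed

lemma slice_objective_gap:
  fixes D :: "'a::euclidean_space set" and a :: "nat \<Rightarrow> 'a" and x0 G :: 'a and \<beta> :: real and n :: nat
  defines "P \<equiv> {X \<in> D. (\<forall>i\<in>{1..n}. a i \<bullet> X \<le> a i \<bullet> x0) \<and> G \<bullet> X \<le> \<beta>}"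
    and "c \<equiv> - (\<Sum>i\<in>{1..n}. a i)"
  assumes "closed D" "convex D" "x0 \<in> P"
    and slice: "\<And>X. X \<in> D \<Longrightarrow> \<forall>i\<in>{1..n}. a i \<bullet> X = a i \<bullet> x0 \<Longrightarrow> G \<bullet> X \<le> \<beta> \<Longrightarrow> dist x0 X < \<delta>"
  obtains \<gamma> where "0 < \<gamma>" "\<And>X. X \<in> P \<Longrightarrow> c \<bullet> x0 \<le> c \<bullet> X"
    "{X \<in> P. c \<bullet> X = c \<bullet> x0} \<subseteq> ball x0 \<delta>"
    "\<And>X. X \<in> P \<Longrightarrow> \<delta> \<le> dist x0 X \<Longrightarrow> c \<bullet> x0 + \<gamma> \<le> c \<bullet> X"
proof -
  have c_diff: "c \<bullet> X = c \<bullet> x0 + (\<Sum>i\<in>{1..n}. a i \<bullet> x0 - a i \<bullet> X)" for X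
    by (simp add: c_def inner_sum_left sum_subtractf)
  have min: "c \<bullet> x0 \<le> c \<bullet> X" if "X \<in> P" for X
  proof -
    have "0 \<le> (\<Sum>i\<in>{1..n}. a i \<bullet> x0 - a i \<bullet> X)"
      using that by (auto simp: P_def intro: sum_nonneg)
    then show ?thesis using c_diff[of X] by linarith
  qed
  have argmin_near: "dist x0 X < \<delta>" if "X \<in> P" "c \<bullet> X = c \<bullet> x0" for X
  proof -
    have "(\<Sum>i\<in>{1..n}. a i \<bullet> x0 - a i \<bullet> X) = 0"
      using that(2) c_diff[of X] by simp
    then have "\<forall>i\<in>{1..n}. a i \<bullet> X = a i \<bullet> x0"
      using that(1) sum_nonneg_eq_0_iff[of "{1..n}" "\<lambda>i. a i \<bullet> x0 - a i \<bullet> X"]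
      by (auto simp: P_def)
    then show ?thesis
      using that(1) slice by (auto simp: P_def)
  qed
  have P_eq: "P = D \<inter> (\<Inter>i\<in>{1..n}. {X. a i \<bullet> X \<le> a i \<bullet> x0}) \<inter> {X. G \<bullet> X \<le> \<beta>}"
    by (auto simp: P_def)
  have "closed P"
    unfolding P_eq by (intro closed_Int assms(3) closed_INT ballI closed_halfspace_le)
  moreover have "convex P"
    unfolding P_eq by (intro convex_Int assms(4) convex_INT ballI convex_halfspace_le)
  ultimately obtain \<gamma> where "0 < \<gamma>" "\<And>X. X \<in> P \<Longrightarrow> \<delta> \<le> dist x0 X \<Longrightarrow> c \<bullet> x0 + \<gamma> \<le> c \<bullet> X"
    using linear_gap_outside_ball[OF _ _ assms(5) min argmin_near] by blast
  moreover have "{X \<in> P. c \<bullet> X = c \<bullet> x0} \<subseteq> ball x0 \<delta>"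
    using argmin_near by auto
  ultimately show ?thesis
    using that min by blast
qed

lemma not_lmi_cond_if_isolated_slice:
  fixes Xs :: "'a::euclidean_space set" and a :: "nat \<Rightarrow> 'a"
  assumes "x0 \<in> clconv Xs" "ball x0 \<delta> \<inter> Xs = {}" "G \<bullet> x0 \<le> \<beta>"
    and slice: "\<And>X. X \<in> clconv Xs \<Longrightarrow> \<forall>i\<in>{1..mstar}. a i \<bullet> X = a i \<bullet> x0 \<Longrightarrow> G \<bullet> X \<le> \<beta>
                  \<Longrightarrow> dist x0 X < \<delta>"
    and slater: "y \<in> rel_interior (clconv Xs)" "\<forall>i\<in>{1..mstar}. a i \<bullet> y = a i \<bullet> x0" "G \<bullet> y \<le> \<beta>"
  shows "\<not> lmi_cond Xs mstar"
proof
  assume lmi: "lmi_cond Xs mstar"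
  define A where "A i = (if i = Suc mstar then G else a i)" for i
  define b where "b i = (if i = Suc mstar then ereal \<beta> else ereal (a i \<bullet> x0))" for i
  define A0 where "A0 = - (\<Sum>i\<in>{1..mstar}. a i)"
  define \<mu> :: "nat \<Rightarrow> real" where "\<mu> i = (if i \<in> {1..mstar} then 1 else 0)" for i
  define Crel where "Crel = {X \<in> clconv Xs. \<forall>i\<in>{1..Suc mstar}. ereal (A i \<bullet> X) \<le> b i}"
  define C where "C = {X \<in> Xs. \<forall>i\<in>{1..Suc mstar}. ereal (A i \<bullet> X) \<le> b i}"
  have "{1..Suc mstar} = insert (Suc mstar) {1..mstar}"
    by auto
  then have Crel_eq: "Crel = {X \<in> clconv Xs. (\<forall>i\<in>{1..mstar}. a i \<bullet> X \<le> a i \<bullet> x0) \<and> G \<bullet> X \<le> \<beta>}"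
    by (auto simp: Crel_def A_def b_def)
  have x0: "x0 \<in> Crel"
    using assms(1,3) by (simp add: Crel_eq)
  obtain \<gamma> where \<gamma>: "0 < \<gamma>" and min: "\<And>X. X \<in> Crel \<Longrightarrow> A0 \<bullet> x0 \<le> A0 \<bullet> X"
    and argmin: "{X \<in> Crel. A0 \<bullet> X = A0 \<bullet> x0} \<subseteq> ball x0 \<delta>"
    and gap: "\<And>X. X \<in> Crel \<Longrightarrow> \<delta> \<le> dist x0 X \<Longrightarrow> A0 \<bullet> x0 + \<gamma> \<le> A0 \<bullet> X"
    using slice_objective_gap[OF closed_clconv convex_clconv x0[unfolded Crel_eq] slice]
    unfolding A0_def Crel_eq by blast
  have Vrel: "(INF X\<in>Crel. ereal (A0 \<bullet> X)) = ereal (A0 \<bullet> x0)"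
  proof (rule antisym)
    show "(INF X\<in>Crel. ereal (A0 \<bullet> X)) \<le> ereal (A0 \<bullet> x0)"
      using x0 by (rule INF_lower)
    show "ereal (A0 \<bullet> x0) \<le> (INF X\<in>Crel. ereal (A0 \<bullet> X))"
      using min by (intro INF_greatest) simp
  qed
  have "ereal (A0 \<bullet> x0 + \<gamma>) \<le> (INF X\<in>C. ereal (A0 \<bullet> X))"
  proof (rule INF_greatest)
    fix X assume "X \<in> C"
    then have "X \<in> Crel" "X \<notin> ball x0 \<delta>"
      using clconv_superset[of Xs] assms(2) by (auto simp: C_def Crel_def)
    then show "ereal (A0 \<bullet> x0 + \<gamma>) \<le> ereal (A0 \<bullet> X)"
      using gap[of X] by simp
  qed
  then have neq: "(INF X\<in>C. ereal (A0 \<bullet> X)) \<noteq> (INF X\<in>Crel. ereal (A0 \<bullet> X))"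
    using \<gamma> Vrel by auto
  have slack: "\<forall>i\<in>{1..Suc mstar}. ereal (A i \<bullet> x0) < b i \<longrightarrow> \<mu> i = 0"
    by (auto simp: A_def b_def \<mu>_def)
  have normal: "- A0 - (\<Sum>i\<in>{1..mstar}. \<mu> i *\<^sub>R A i) \<in> normal_cone (clconv Xs) x0"
    by (simp add: A0_def \<mu>_def A_def normal_cone_def)
  define G' where "G' = A (Suc mstar) - orth_proj (A ` {1..mstar}) (A (Suc mstar))"
  have parallel: "\<exists>c::real. 0 \<le> c \<and> A j - orth_proj (A ` {1..mstar}) (A j) = c *\<^sub>R G'"
    if "j \<in> {1..Suc mstar} - {1..mstar}" for j
  proof -
    from that have "j = Suc mstar" by auto
    then show ?thesis by (intro exI[of _ 1]) (simp add: G'_def)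
  qed
  have "(INF X\<in>C. ereal (A0 \<bullet> X)) = (INF X\<in>Crel. ereal (A0 \<bullet> X))"
    apply (rule lmi[unfolded lmi_cond_def Let_def, rule_format,
          where m = "Suc mstar" and ?A0.0 = A0 and A = A and b = b, folded Crel_def C_def])
    apply (intro conjI)
    subgoal by (simp add: b_def)
    subgoal using slater rel_interior_subset by (fastforce simp: Crel_eq)
    subgoal by (simp add: Vrel)
    subgoal using argmin by (intro bounded_subset[OF bounded_ball[of x0 \<delta>]]) (auto simp: Vrel)
    subgoal
      apply (rule exI[of _ x0], rule exI[of _ \<mu>], rule exI[of _ "{1..mstar}"])
      apply (intro conjI exI[of _ G'] ballI parallel)
      using x0 Vrel slack normal by (auto simp: \<mu>_def)
    done
  with neq show False by contradiction
qed

lemma face_cond_if_lmi_cond: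
  fixes Xs :: "'a::euclidean_space set"
  assumes "closed Xs" "lmi_cond Xs mstar"
  shows "face_cond Xs mstar"
  unfolding face_cond_def
proof (intro allI impI; erule conjE; rule ccontr)
  fix F assume F: "F face_of clconv Xs" "aff_dim F \<le> int mstar" and "\<not> F \<subseteq> Xs"
  have "open (- Xs)"
    using assms(1) by (simp add: open_Compl)
  obtain x0 where x0: "x0 \<in> F" "x0 \<notin> Xs" "F = clconv Xs \<Longrightarrow> x0 \<in> rel_interior (clconv Xs)"
  proof (cases "F = clconv Xs")
    case True
    have "closure (rel_interior (clconv Xs)) = clconv Xs"
      using convex_closure_rel_interior[OF convex_clconv[of Xs]] closure_closed[OF closed_clconv[of Xs]]
      by simp
    then have "- Xs \<inter> closure (rel_interior (clconv Xs)) \<noteq> {}"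
      using \<open>\<not> F \<subseteq> Xs\<close> True by auto
    then have "- Xs \<inter> rel_interior (clconv Xs) \<noteq> {}"
      using open_Int_closure_eq_empty[OF \<open>open (- Xs)\<close>, of "rel_interior (clconv Xs)"] by simp
    then show ?thesis
      using that True rel_interior_subset by blast
  next
    case False
    then show ?thesis using that \<open>\<not> F \<subseteq> Xs\<close> by blast
  qed
  obtain \<delta> where "0 < \<delta>" "ball x0 \<delta> \<subseteq> - Xs"
    using open_contains_ball_eq[OF \<open>open (- Xs)\<close>] x0(2) by blast
  then have "ball x0 \<delta> \<inter> Xs = {}"
    by auto
  obtain G \<beta> a y where G: "G \<bullet> x0 < \<beta>"
    and slice: "\<And>X. X \<in> clconv Xs \<Longrightarrow> \<forall>i\<in>{1..mstar}. a i \<bullet> X = a i \<bullet> x0 \<Longrightarrow> G \<bullet> X \<le> \<beta>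
                  \<Longrightarrow> dist x0 X < \<delta>"
    and slater: "y \<in> rel_interior (clconv Xs)" "\<forall>i\<in>{1..mstar}. a i \<bullet> y = a i \<bullet> x0" "G \<bullet> y \<le> \<beta>"
    using face_exists_isolating_slice[OF closed_clconv convex_clconv F x0(1,3) \<open>0 < \<delta>\<close>] by blast
  have "x0 \<in> clconv Xs"
    using subsetD[OF face_of_imp_subset[OF F(1)] x0(1)] .
  then have "\<not> lmi_cond Xs mstar"
    using not_lmi_cond_if_isolated_slice[OF _ \<open>ball x0 \<delta> \<inter> Xs = {}\<close> less_imp_le[OF G] slice slater]
    by blast
  with assms(2) show False by contradiction
qed

lemma face_cond_iff_lmi_cond:
  fixes Xs :: "'a::euclidean_space set"
  assumes "closed Xs"
  shows "face_cond Xs mstar \<longleftrightarrow> lmi_cond Xs mstar"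
  using lmi_cond_if_face_cond face_cond_if_lmi_cond[OF assms] by blast

theorem theorem10:
  fixes k mstar :: nat
  assumes "1 \<le> k" and "k \<le> CARD('n)" and "CARD('n) \<le> CARD('p)"
  shows
   "(\<forall>(Q :: (real^'n^'n) set) Xs.
        (Q = psd_mats \<or> Q = sym_mats) \<and> is_domain_set Q k Xs \<and> Xs \<noteq> {} \<and> closed Xs
        \<and> \<not> contains_line (clconv Xs)
        \<longrightarrow> (face_cond Xs mstar \<longleftrightarrow> lmi_cond Xs mstar))
    \<and> (\<forall>Xs :: (real^'p^'n) set.
        is_domain_set UNIV k Xs \<and> Xs \<noteq> {} \<and> closed Xs \<and> \<not> contains_line (clconv Xs)
        \<longrightarrow> (face_cond Xs mstar \<longleftrightarrow> lmi_cond Xs mstar))"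
  by (intro conjI allI impI; elim conjE; rule face_cond_iff_lmi_cond; assumption)

end
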